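(* Let $G$ be a graph that contains an induced subgraph $T$ isomorphic to the path $P_3$ on three vertices or to the triangle $C_3$, such that every vertex of $T$ has degree exactly $3$ in $G$. If $\chi_c^{\star}(G\setminus T)\leq 4$, then $\chi_c^{\star}(G)\leq 4$.
   Context: All graphs are finite and simple. $G\setminus T$ denotes the subgraph of $G$ induced by the vertices not in $T$. A correspondence-cover of a graph $G$ is a pair $(L,H)$ where $H$ is a graph and $L$ maps each $v\in V(G)$ to a subset $L(v)\subseteq V(H)$ such that: the sets $L(v)$ partition $V(H)$; each $L(v)$ induces a clique in $H$; if $uv\notin E(G)$ there are no edges of $H$ between $L(u)$ and $L(v)$; if $uv\in E(G)$ the edges of $H$ between $L(u)$ and $L(v)$ form a matching. The cover is $k$-fold if $|L(v)|=k$ for all $v$. An independent transversal of $(L,H)$ is an independent set of $H$ containing exactly one vertex of each $L(v)$. A $k$-fold cover has a packing if it has $k$ pairwise vertex-disjoint independent transversals. $\chi_c^{\star}(G)$ is the least $k\geq 1$ such that every $k$-fold correspondence-cover of $G$ has a packing. *)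

theory Defs
  imports Main
begin

definition graph :: "'a set \<Rightarrow> 'a set set \<Rightarrow> bool" where
  "graph V E \<longleftrightarrow> finite V \<and>
     (\<forall>e\<in>E. \<exists>u v. e = {u, v} \<and> u \<noteq> v \<and> u \<in> V \<and> v \<in> V)"

definition degree :: "'a set \<Rightarrow> 'a set set \<Rightarrow> 'a \<Rightarrow> nat" where
  "degree V E v = card {u \<in> V. {u, v} \<in> E}"

definition induced_edges :: "'a set set \<Rightarrow> 'a set \<Rightarrow> 'a set set" where
  "induced_edges E S = {e \<in> E. e \<subseteq> S}"

definition corr_cover :: "'a set \<Rightarrow> 'a set set \<Rightarrow> ('a \<Rightarrow> 'b set) \<Rightarrow> 'b set \<Rightarrow> 'b set set \<Rightarrow> bool" where
  "corr_cover V E L VH EH \<longleftrightarrow>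
     graph VH EH \<and>
     (\<forall>v\<in>V. L v \<subseteq> VH) \<and> (\<Union>v\<in>V. L v) = VH \<and>
     (\<forall>u\<in>V. \<forall>v\<in>V. u \<noteq> v \<longrightarrow> L u \<inter> L v = {}) \<and>
     (\<forall>v\<in>V. \<forall>x\<in>L v. \<forall>y\<in>L v. x \<noteq> y \<longrightarrow> {x, y} \<in> EH) \<and>
     (\<forall>u\<in>V. \<forall>v\<in>V. u \<noteq> v \<longrightarrow> {u, v} \<notin> E \<longrightarrow>
        (\<forall>x\<in>L u. \<forall>y\<in>L v. {x, y} \<notin> EH)) \<and>
     (\<forall>u\<in>V. \<forall>v\<in>V. {u, v} \<in> E \<longrightarrow>
        (\<forall>x\<in>L u. \<forall>y1\<in>L v. \<forall>y2\<in>L v. {x, y1} \<in> EH \<longrightarrow> {x, y2} \<in> EH \<longrightarrow> y1 = y2))"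

definition kfold_cover :: "nat \<Rightarrow> 'a set \<Rightarrow> 'a set set \<Rightarrow> ('a \<Rightarrow> 'b set) \<Rightarrow> 'b set \<Rightarrow> 'b set set \<Rightarrow> bool" where
  "kfold_cover k V E L VH EH \<longleftrightarrow> corr_cover V E L VH EH \<and> (\<forall>v\<in>V. card (L v) = k)"

definition indep_transversal :: "'a set \<Rightarrow> ('a \<Rightarrow> 'b set) \<Rightarrow> 'b set \<Rightarrow> 'b set set \<Rightarrow> 'b set \<Rightarrow> bool" where
  "indep_transversal V L VH EH I \<longleftrightarrow>
     I \<subseteq> VH \<and> (\<forall>x\<in>I. \<forall>y\<in>I. {x, y} \<notin> EH) \<and> (\<forall>v\<in>V. card (I \<inter> L v) = 1)"

definition has_packing :: "nat \<Rightarrow> 'a set \<Rightarrow> ('a \<Rightarrow> 'b set) \<Rightarrow> 'b set \<Rightarrow> 'b set set \<Rightarrow> bool" where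
  "has_packing k V L VH EH \<longleftrightarrow>
     (\<exists>I :: nat \<Rightarrow> 'b set. (\<forall>i<k. indep_transversal V L VH EH (I i)) \<and>
        (\<forall>i<k. \<forall>j<k. i \<noteq> j \<longrightarrow> I i \<inter> I j = {}))"

text \<open>Correspondence packing number. Covers are taken with H having vertices in nat;
  since V(H) is finite, every cover is isomorphic to one of this form.\<close>
definition chi_c_star :: "'a set \<Rightarrow> 'a set set \<Rightarrow> nat" where
  "chi_c_star V E = (LEAST k. 1 \<le> k \<and>
     (\<forall>(L :: 'a \<Rightarrow> nat set) VH EH. kfold_cover k V E L VH EH \<longrightarrow> has_packing k V L VH EH))"

end

theory Submission
  imports Defs "HOL-Combinatorics.Transposition"
begin

(* Take a packing of G - T with 4 transversals and extend each of them to T. A vertex x of T has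
   3 - deg_T(x) neighbours outside T, so the elements of L x blocked for colour i by those
   neighbours form a bipartite conflict graph between the colours and L x of maximum degree at
   most 2; the degree is at most 1 for the middle vertex b, and for all of T when T is a triangle.
   After renumbering the lists so that the conflicts at b and the matchings between consecutive
   lists lie on the diagonal, it remains to find permutations of {0, 1, 2, 3} avoiding a few 4 x 4
   relations of bounded degree, which is a finite check. Passing between chi_c_star and
   packability uses that packability is monotone in k and holds for k = 2|V| + 1, by a greedy
   colouring that removes conflicts by swapping colours. *)

lemma graph_finite: "graph V E \<Longrightarrow> finite V"
  unfolding graph_def by simp

lemma graph_no_loop: "graph V E \<Longrightarrow> {x, x} \<notin> E"
  unfolding graph_def by auto

lemma graph_edge_subgraph:
  assumes "graph V E" "finite S" "E' \<subseteq> {e\<in>E. e \<subseteq> S}"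
  shows "graph S E'"
  unfolding graph_def
proof (intro conjI ballI)
  fix e assume "e \<in> E'"
  then have "e \<in> E" "e \<subseteq> S" using assms(3) by auto
  moreover obtain u v where "e = {u, v}" "u \<noteq> v"
    using assms(1) \<open>e \<in> E\<close> unfolding graph_def by blast
  ultimately show "\<exists>u v. e = {u, v} \<and> u \<noteq> v \<and> u \<in> S \<and> v \<in> S" by auto
qed (fact assms(2))

lemma graph_induced: "graph V E \<Longrightarrow> S \<subseteq> V \<Longrightarrow> graph S (induced_edges E S)"
  by (rule graph_edge_subgraph)
    (auto simp: induced_edges_def intro: finite_subset dest: graph_finite)

lemma degree_split:
  assumes "graph V E" "S \<subseteq> T" "T \<subseteq> V" "\<forall>u\<in>S. {u, x} \<in> E"
  shows "card {w\<in>V - T. {w, x} \<in> E} + card S \<le> degree V E x"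
proof -
  have "finite V" using assms(1) by (rule graph_finite)
  have "card {w\<in>V - T. {w, x} \<in> E} + card S = card ({w\<in>V - T. {w, x} \<in> E} \<union> S)"
    using \<open>finite V\<close> assms(2,3) by (intro card_Un_disjoint[symmetric]) (auto intro: finite_subset)
  also have "\<dots> \<le> degree V E x"
    unfolding degree_def using \<open>finite V\<close> assms(2-4) by (intro card_mono) auto
  finally show ?thesis .
qed

lemma corr_cover_graph: "corr_cover V E L VH EH \<Longrightarrow> graph VH EH"
  unfolding corr_cover_def by simp

lemma corr_cover_subset: "corr_cover V E L VH EH \<Longrightarrow> v \<in> V \<Longrightarrow> L v \<subseteq> VH"
  unfolding corr_cover_def by simp

lemma corr_cover_finite: "corr_cover V E L VH EH \<Longrightarrow> v \<in> V \<Longrightarrow> finite (L v)"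
  by (meson corr_cover_graph corr_cover_subset finite_subset graph_finite)

lemma corr_cover_owner_unique:
  "corr_cover V E L VH EH \<Longrightarrow> u \<in> V \<Longrightarrow> v \<in> V \<Longrightarrow> x \<in> L u \<Longrightarrow> x \<in> L v \<Longrightarrow> u = v"
  unfolding corr_cover_def by (meson disjoint_iff)

lemma corr_cover_clique:
  "corr_cover V E L VH EH \<Longrightarrow> v \<in> V \<Longrightarrow> x \<in> L v \<Longrightarrow> y \<in> L v \<Longrightarrow> x \<noteq> y \<Longrightarrow> {x, y} \<in> EH"
  unfolding corr_cover_def by simp

lemma corr_cover_nonadjacent:
  "corr_cover V E L VH EH \<Longrightarrow> u \<in> V \<Longrightarrow> v \<in> V \<Longrightarrow> u \<noteq> v \<Longrightarrow> {u, v} \<notin> E \<Longrightarrow>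
    x \<in> L u \<Longrightarrow> y \<in> L v \<Longrightarrow> {x, y} \<notin> EH"
  unfolding corr_cover_def by simp

lemma corr_cover_matching:
  "corr_cover V E L VH EH \<Longrightarrow> u \<in> V \<Longrightarrow> v \<in> V \<Longrightarrow> {u, v} \<in> E \<Longrightarrow> x \<in> L u \<Longrightarrow>
    y \<in> L v \<Longrightarrow> y' \<in> L v \<Longrightarrow> {x, y} \<in> EH \<Longrightarrow> {x, y'} \<in> EH \<Longrightarrow> y = y'"
  unfolding corr_cover_def by simp

lemma corr_cover_restrict:
  assumes cover: "corr_cover V E L VH EH" and V': "V' \<subseteq> V" and L': "\<forall>v\<in>V'. L' v \<subseteq> L v"
    and E': "\<And>u v. u \<in> V' \<Longrightarrow> v \<in> V' \<Longrightarrow> {u, v} \<in> E' \<longleftrightarrow> {u, v} \<in> E"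
  shows "corr_cover V' E' L' (\<Union>v\<in>V'. L' v) {e\<in>EH. e \<subseteq> (\<Union>v\<in>V'. L' v)}"
    (is "corr_cover _ _ _ ?W ?EW")
  unfolding corr_cover_def
proof (intro conjI ballI impI)
  have "?W \<subseteq> VH"
    using corr_cover_subset[OF cover] V' L' by fast
  then have "finite ?W"
    using graph_finite[OF corr_cover_graph[OF cover]] by (rule finite_subset)
  then show "graph ?W ?EW"
    by (rule graph_edge_subgraph[OF corr_cover_graph[OF cover]]) auto
next
  fix u v assume "u \<in> V'" "v \<in> V'" "u \<noteq> v"
  then show "L' u \<inter> L' v = {}"
    using corr_cover_owner_unique[OF cover, of u v] V' L' by auto
next
  fix v x y assume "v \<in> V'" "x \<in> L' v" "y \<in> L' v" "x \<noteq> y"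
  then show "{x, y} \<in> ?EW"
    using corr_cover_clique[OF cover, of v x y] V' L' by auto
next
  fix u v x y assume "u \<in> V'" "v \<in> V'" "u \<noteq> v" "{u, v} \<notin> E'" "x \<in> L' u" "y \<in> L' v"
  then show "{x, y} \<notin> ?EW"
    using corr_cover_nonadjacent[OF cover, of u v x y] V' L' E' by auto
next
  fix u v x y y' assume "u \<in> V'" "v \<in> V'" "{u, v} \<in> E'" "x \<in> L' u" "y \<in> L' v" "y' \<in> L' v"
    "{x, y} \<in> ?EW" "{x, y'} \<in> ?EW"
  then show "y = y'"
    using corr_cover_matching[OF cover, of u v x y y'] V' L' E' by auto
qed auto

definition degree_bounded :: "nat \<Rightarrow> 'i set \<Rightarrow> 'j set \<Rightarrow> ('i \<Rightarrow> 'j \<Rightarrow> bool) \<Rightarrow> bool" where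
  "degree_bounded d I J R \<longleftrightarrow>
     (\<forall>i\<in>I. card {j\<in>J. R i j} \<le> d) \<and> (\<forall>j\<in>J. card {i\<in>I. R i j} \<le> d)"

lemma degree_bounded_converse: "degree_bounded d I J R \<Longrightarrow> degree_bounded d J I (\<lambda>j i. R i j)"
  unfolding degree_bounded_def by simp

lemma degree_bounded_row_card_le:
  assumes "degree_bounded d I J R" "finite J" "i \<in> I" "S \<subseteq> J" "\<forall>j\<in>S. R i j"
  shows "card S \<le> d"
proof -
  have "card S \<le> card {j\<in>J. R i j}" using assms(2,4,5) by (intro card_mono) auto
  moreover have "card {j\<in>J. R i j} \<le> d" using assms(1,3) unfolding degree_bounded_def by simp
  ultimately show ?thesis by linarith
qed

lemma degree_bounded_col_card_le:
  assumes "degree_bounded d I J R" "finite I" "j \<in> J" "S \<subseteq> I" "\<forall>i\<in>S. R i j"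
  shows "card S \<le> d"
  using degree_bounded_row_card_le[OF degree_bounded_converse[OF assms(1)] assms(2-)] .

lemma card_Collect_bij_betw:
  assumes "bij_betw f A B"
  shows "card {x\<in>A. P (f x)} = card {y\<in>B. P y}"
proof -
  have "f ` {x\<in>A. P (f x)} = {y\<in>B. P y}"
    using assms unfolding bij_betw_def by blast
  moreover have "inj_on f {x\<in>A. P (f x)}"
    using assms unfolding bij_betw_def by (auto intro: inj_on_subset)
  ultimately show ?thesis by (metis card_image)
qed

lemma degree_bounded_comp_bij:
  assumes R: "degree_bounded d I J R" and \<alpha>: "bij_betw \<alpha> I' I" and \<beta>: "bij_betw \<beta> J' J"
  shows "degree_bounded d I' J' (\<lambda>i j. R (\<alpha> i) (\<beta> j))"
  unfolding degree_bounded_def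
proof (intro conjI ballI)
  fix i assume "i \<in> I'"
  then have "\<alpha> i \<in> I" using \<alpha> unfolding bij_betw_def by blast
  then show "card {j\<in>J'. R (\<alpha> i) (\<beta> j)} \<le> d"
    using R card_Collect_bij_betw[OF \<beta>, of "R (\<alpha> i)"] unfolding degree_bounded_def by simp
next
  fix j assume "j \<in> J'"
  then have "\<beta> j \<in> J" using \<beta> unfolding bij_betw_def by blast
  then show "card {i\<in>I'. R (\<alpha> i) (\<beta> j)} \<le> d"
    using R card_Collect_bij_betw[OF \<alpha>, of "\<lambda>x. R x (\<beta> j)"] unfolding degree_bounded_def by simp
qed

lemma card_le_card_if_subsingleton_cover:
  assumes "finite N" "S \<subseteq> (\<Union>w\<in>N. A w)" and subsingleton: "\<And>w a b. w \<in> N \<Longrightarrow> a \<in> A w \<Longrightarrow> b \<in> A w \<Longrightarrow> a = b"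
  shows "card S \<le> card N"
proof -
  have "\<forall>x\<in>S. \<exists>w\<in>N. x \<in> A w" using assms(2) by blast
  then obtain f where f: "\<forall>x\<in>S. f x \<in> N \<and> x \<in> A (f x)" by metis
  then have "inj_on f S" by (metis inj_onI subsingleton)
  then show ?thesis using f assms(1) by (intro card_inj_on_le) auto
qed

lemma matching_degree_bounded:
  assumes cover: "corr_cover V E L VH EH" and "x \<in> V" "y \<in> V" "{x, y} \<in> E"
  shows "degree_bounded 1 (L x) (L y) (\<lambda>p q. {p, q} \<in> EH)"
  unfolding degree_bounded_def One_nat_def
proof (intro conjI ballI)
  fix p assume "p \<in> L x"
  then show "card {q\<in>L y. {p, q} \<in> EH} \<le> Suc 0"
    using corr_cover_matching[OF cover \<open>x \<in> V\<close> \<open>y \<in> V\<close> \<open>{x, y} \<in> E\<close>]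
      corr_cover_finite[OF cover \<open>y \<in> V\<close>] by (subst card_le_Suc0_iff_eq) auto
next
  fix q assume "q \<in> L y"
  have "{y, x} \<in> E" using \<open>{x, y} \<in> E\<close> by (simp add: insert_commute)
  then show "card {p\<in>L x. {p, q} \<in> EH} \<le> Suc 0"
    using corr_cover_matching[OF cover \<open>y \<in> V\<close> \<open>x \<in> V\<close>] \<open>q \<in> L y\<close>
      corr_cover_finite[OF cover \<open>x \<in> V\<close>] by (subst card_le_Suc0_iff_eq) (auto simp: insert_commute)
qed

lemma conflict_degree_bounded:
  assumes cover: "corr_cover V E L VH EH" and x: "x \<in> V"
    and N: "N \<subseteq> V" "finite N" "card N \<le> d" "\<forall>w\<in>N. {w, x} \<in> E"
    and s: "finite I" "\<forall>w\<in>N. inj_on (s w) I \<and> s w ` I \<subseteq> L w"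
  shows "degree_bounded d I (L x) (\<lambda>i y. \<exists>w\<in>N. {s w i, y} \<in> EH)"
  unfolding degree_bounded_def
proof (intro conjI ballI)
  fix i assume "i \<in> I"
  have "card {y\<in>L x. \<exists>w\<in>N. {s w i, y} \<in> EH} \<le> card N"
  proof (rule card_le_card_if_subsingleton_cover[OF N(2)])
    show "{y\<in>L x. \<exists>w\<in>N. {s w i, y} \<in> EH} \<subseteq> (\<Union>w\<in>N. {y\<in>L x. {s w i, y} \<in> EH})" by blast
  next
    fix w y y' assume "w \<in> N" "y \<in> {y\<in>L x. {s w i, y} \<in> EH}" "y' \<in> {y\<in>L x. {s w i, y} \<in> EH}"
    then show "y = y'"
      using corr_cover_matching[OF cover, of w x "s w i" y y'] N s \<open>i \<in> I\<close> x by blast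
  qed
  then show "card {y\<in>L x. \<exists>w\<in>N. {s w i, y} \<in> EH} \<le> d" using N(3) by simp
next
  fix y assume "y \<in> L x"
  have "card {i\<in>I. \<exists>w\<in>N. {s w i, y} \<in> EH} \<le> card N"
  proof (rule card_le_card_if_subsingleton_cover[OF N(2)])
    show "{i\<in>I. \<exists>w\<in>N. {s w i, y} \<in> EH} \<subseteq> (\<Union>w\<in>N. {i\<in>I. {s w i, y} \<in> EH})" by blast
  next
    fix w i j assume w: "w \<in> N" and "i \<in> {i\<in>I. {s w i, y} \<in> EH}" "j \<in> {i\<in>I. {s w i, y} \<in> EH}"
    then have "i \<in> I" "j \<in> I" "{y, s w i} \<in> EH" "{y, s w j} \<in> EH" by (auto simp: insert_commute)
    moreover have "{x, w} \<in> E" using N(4) w by (simp add: insert_commute)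
    ultimately have "s w i = s w j"
      using corr_cover_matching[OF cover x, of w y "s w i" "s w j"] N s w \<open>y \<in> L x\<close> by blast
    then show "i = j" using s w \<open>i \<in> I\<close> \<open>j \<in> I\<close> by (auto dest: inj_onD)
  qed
  then show "card {i\<in>I. \<exists>w\<in>N. {s w i, y} \<in> EH} \<le> d" using N(3) by simp
qed

lemma bij_avoiding_step:
  assumes \<sigma>: "bij_betw \<sigma> I B" and F: "degree_bounded d I B F" and "finite I" "2 * d < card I"
    and i: "i \<in> I" "F i (\<sigma> i)"
  shows "\<exists>\<sigma>'. bij_betw \<sigma>' I B \<and> {x\<in>I. F x (\<sigma>' x)} \<subset> {x\<in>I. F x (\<sigma> x)}"
proof -
  let ?S1 = "{j\<in>I. F i (\<sigma> j)}" and ?S2 = "{j\<in>I. F j (\<sigma> i)}"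
  have "\<sigma> i \<in> B" using \<sigma> i unfolding bij_betw_def by blast
  then have "card ?S1 \<le> d" "card ?S2 \<le> d"
    using F i card_Collect_bij_betw[OF \<sigma>, of "F i"] unfolding degree_bounded_def by auto
  then have "card (?S1 \<union> ?S2) < card I"
    using card_Un_le[of ?S1 ?S2] \<open>2 * d < card I\<close> by linarith
  moreover have "finite (?S1 \<union> ?S2)" using \<open>finite I\<close> by simp
  ultimately have "\<not> I \<subseteq> ?S1 \<union> ?S2" by (meson card_mono not_le)
  then obtain j where j: "j \<in> I" "\<not> F i (\<sigma> j)" "\<not> F j (\<sigma> i)" by blast
  (* Swapping the values at i and j repairs i without creating a new conflict. *)
  let ?\<sigma>' = "\<sigma> \<circ> transpose i j"
  have "bij_betw ?\<sigma>' I B" by (rule iffD2[OF bij_betw_swap_iff[OF i(1) j(1)] \<sigma>])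
  moreover have "F x (?\<sigma>' x) \<Longrightarrow> x \<noteq> i \<and> F x (\<sigma> x)" for x
    using j by (cases "x = i"; cases "x = j") auto
  then have "{x\<in>I. F x (?\<sigma>' x)} \<subseteq> {x\<in>I. F x (\<sigma> x)} - {i}" by blast
  ultimately show ?thesis using i by blast
qed

lemma ex_bij_avoiding:
  assumes "finite I" "finite B" "card I = card B" "degree_bounded d I B F" "2 * d < card I"
  shows "\<exists>\<sigma>. bij_betw \<sigma> I B \<and> (\<forall>i\<in>I. \<not> F i (\<sigma> i))"
proof -
  have "\<exists>\<sigma>'. bij_betw \<sigma>' I B \<and> (\<forall>i\<in>I. \<not> F i (\<sigma>' i))" if "bij_betw \<sigma> I B" for \<sigma>
    using that
  proof (induction "card {x\<in>I. F x (\<sigma> x)}" arbitrary: \<sigma> rule: less_induct)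
    case less
    show ?case
    proof (cases "\<forall>i\<in>I. \<not> F i (\<sigma> i)")
      case False
      then obtain i where "i \<in> I" "F i (\<sigma> i)" by blast
      then obtain \<sigma>' where "bij_betw \<sigma>' I B" "{x\<in>I. F x (\<sigma>' x)} \<subset> {x\<in>I. F x (\<sigma> x)}"
        using bij_avoiding_step[OF less.prems assms(4,1,5)] by blast
      moreover from this(2) have "card {x\<in>I. F x (\<sigma>' x)} < card {x\<in>I. F x (\<sigma> x)}"
        using \<open>finite I\<close> by (simp add: psubset_card_mono)
      ultimately show ?thesis using less.hyps by blast
    qed (use less.prems in blast)
  qed
  moreover obtain \<sigma> where "bij_betw \<sigma> I B" using finite_same_card_bij assms(1-3) by blast
  ultimately show ?thesis by blast
qed

lemma ex_bij_extending_matching: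
  assumes "finite I" "finite B" "card I = card B" and R: "degree_bounded 1 I B R"
  shows "\<exists>\<beta>. bij_betw \<beta> I B \<and> (\<forall>i\<in>I. \<forall>y\<in>B. R i y \<longrightarrow> y = \<beta> i)"
proof -
  have row: "y = y'" if "i \<in> I" "y \<in> B" "y' \<in> B" "R i y" "R i y'" for i y y'
    using degree_bounded_row_card_le[OF R assms(2) that(1), of "{y, y'}"] that
    by (cases "y = y'") auto
  have col: "i = i'" if "i \<in> I" "i' \<in> I" "y \<in> B" "R i y" "R i' y" for i i' y
    using degree_bounded_col_card_le[OF R assms(1) that(3), of "{i, i'}"] that
    by (cases "i = i'") auto
  define D where "D = {i\<in>I. \<exists>y\<in>B. R i y}"
  have "\<forall>i\<in>D. \<exists>y. y \<in> B \<and> R i y" unfolding D_def by blast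
  then obtain f where f: "\<forall>i\<in>D. f i \<in> B \<and> R i (f i)" by (metis bchoice)
  have "inj_on f D"
    using f col unfolding D_def by (intro inj_onI) (metis (no_types, lifting) mem_Collect_eq)
  then have f_bij: "bij_betw f D (f ` D)" by (rule inj_on_imp_bij_betw)
  have "D \<subseteq> I" "f ` D \<subseteq> B" using f unfolding D_def by auto
  then have "card (I - D) = card (B - f ` D)"
    using assms(1-3) \<open>inj_on f D\<close> by (simp add: card_Diff_subset card_image finite_subset)
  then obtain g where g: "bij_betw g (I - D) (B - f ` D)"
    using finite_same_card_bij assms(1,2) by blast
  define \<beta> where "\<beta> i = (if i \<in> D then f i else g i)" for i
  have "bij_betw \<beta> D (f ` D)"
    using f_bij by (rule bij_betw_cong[THEN iffD1, rotated]) (simp add: \<beta>_def)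
  moreover have "bij_betw \<beta> (I - D) (B - f ` D)"
    using g by (rule bij_betw_cong[THEN iffD1, rotated]) (simp add: \<beta>_def)
  ultimately have "bij_betw \<beta> (D \<union> (I - D)) (f ` D \<union> (B - f ` D))" by (rule bij_betw_combine) blast
  then have "bij_betw \<beta> I B" using \<open>D \<subseteq> I\<close> \<open>f ` D \<subseteq> B\<close> by (simp add: Un_Diff_cancel2 sup.absorb2)
  moreover have "y = \<beta> i" if "i \<in> I" "y \<in> B" "R i y" for i y
  proof -
    have "i \<in> D" using that unfolding D_def by blast
    then show ?thesis using row[OF \<open>i \<in> I\<close> \<open>y \<in> B\<close> _ \<open>R i y\<close>] f unfolding \<beta>_def by simp
  qed
  ultimately show ?thesis by blast
qed

(* s v i is the element of L v chosen by the i-th transversal of the packing. *)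
definition packing_map ::
    "nat \<Rightarrow> 'a set \<Rightarrow> 'a set set \<Rightarrow> ('a \<Rightarrow> 'b set) \<Rightarrow> 'b set set \<Rightarrow> ('a \<Rightarrow> nat \<Rightarrow> 'b) \<Rightarrow> bool" where
  "packing_map k V E L EH s \<longleftrightarrow> (\<forall>v\<in>V. bij_betw (s v) {..<k} (L v)) \<and>
     (\<forall>u\<in>V. \<forall>v\<in>V. {u, v} \<in> E \<longrightarrow> (\<forall>i<k. {s u i, s v i} \<notin> EH))"

lemma packing_map_mem: "packing_map k V E L EH s \<Longrightarrow> v \<in> V \<Longrightarrow> i < k \<Longrightarrow> s v i \<in> L v"
  unfolding packing_map_def bij_betw_def by auto

lemma has_packing_if_packing_map:
  assumes cover: "corr_cover V E L VH EH" and s: "packing_map k V E L EH s"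
  shows "has_packing k V L VH EH"
proof -
  define I where "I i = (\<lambda>v. s v i) ` V" for i
  have mem: "s v i \<in> L v" if "v \<in> V" "i < k" for v i
    using packing_map_mem[OF s that] .
  note owner = corr_cover_owner_unique[OF cover]
  have "indep_transversal V L VH EH (I i)" if i: "i < k" for i
    unfolding indep_transversal_def
  proof (intro conjI ballI)
    show "I i \<subseteq> VH"
      using corr_cover_subset[OF cover] mem i unfolding I_def by blast
  next
    fix x y assume "x \<in> I i" "y \<in> I i"
    then obtain u v where u: "u \<in> V" "x = s u i" and v: "v \<in> V" "y = s v i"
      unfolding I_def by blast
    consider "u = v" | "{u, v} \<in> E" | "u \<noteq> v" "{u, v} \<notin> E" by blast
    then show "{x, y} \<notin> EH"
    proof cases
      case 1
      then show ?thesis using u v graph_no_loop[OF corr_cover_graph[OF cover]] by simp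
    next
      case 2
      then show ?thesis using s u v i unfolding packing_map_def by blast
    next
      case 3
      then show ?thesis using corr_cover_nonadjacent[OF cover u(1) v(1)] mem u v i by blast
    qed
  next
    fix v assume "v \<in> V"
    then have "I i \<inter> L v = {s v i}"
      using owner mem i unfolding I_def by blast
    then show "card (I i \<inter> L v) = 1" by simp
  qed
  moreover have "I i \<inter> I j = {}" if "i < k" "j < k" "i \<noteq> j" for i j
  proof -
    have "s u i \<noteq> s v j" if "u \<in> V" "v \<in> V" for u v
    proof
      assume eq: "s u i = s v j"
      then have "u = v" using owner mem that \<open>i < k\<close> \<open>j < k\<close> by metis
      then show False
        using eq s that \<open>i < k\<close> \<open>j < k\<close> \<open>i \<noteq> j\<close>
        unfolding packing_map_def bij_betw_def by (auto dest: inj_onD)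
    qed
    then show ?thesis unfolding I_def by blast
  qed
  ultimately show ?thesis unfolding has_packing_def by blast
qed

lemma packing_map_if_has_packing:
  assumes cover: "kfold_cover k V E L VH EH" and "has_packing k V L VH EH"
  shows "\<exists>s. packing_map k V E L EH s"
proof -
  obtain I where it: "\<And>i. i < k \<Longrightarrow> indep_transversal V L VH EH (I i)"
    and disj: "\<And>i j. i < k \<Longrightarrow> j < k \<Longrightarrow> i \<noteq> j \<Longrightarrow> I i \<inter> I j = {}"
    using assms(2) unfolding has_packing_def by blast
  have cc: "corr_cover V E L VH EH" and card: "\<And>v. v \<in> V \<Longrightarrow> card (L v) = k"
    using cover unfolding kfold_cover_def by auto
  define s where "s v i = the_elem (I i \<inter> L v)" for v i
  have single: "I i \<inter> L v = {s v i}" if "i < k" "v \<in> V" for i v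
  proof -
    have "card (I i \<inter> L v) = 1"
      using it[OF \<open>i < k\<close>] \<open>v \<in> V\<close> unfolding indep_transversal_def by simp
    then obtain x where "I i \<inter> L v = {x}" by (auto simp: card_1_singleton_iff)
    then show ?thesis unfolding s_def by simp
  qed
  have "bij_betw (s v) {..<k} (L v)" if v: "v \<in> V" for v
  proof -
    have inj: "inj_on (s v) {..<k}"
    proof (rule inj_onI)
      fix i j assume "i \<in> {..<k}" "j \<in> {..<k}" "s v i = s v j"
      then have "s v i \<in> I i \<inter> I j" using single[of i v] single[of j v] v by auto
      then show "i = j" using disj[of i j] \<open>i \<in> {..<k}\<close> \<open>j \<in> {..<k}\<close> by auto
    qed
    moreover have "s v ` {..<k} \<subseteq> L v" using single v by auto
    moreover have "card (s v ` {..<k}) = card (L v)" using inj card v by (simp add: card_image)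
    ultimately have "s v ` {..<k} = L v"
      using corr_cover_finite[OF cc v] by (metis card_subset_eq)
    with inj show ?thesis unfolding bij_betw_def by simp
  qed
  moreover have "{s u i, s v i} \<notin> EH" if "u \<in> V" "v \<in> V" "i < k" for u v i
  proof -
    have "s u i \<in> I i" "s v i \<in> I i" using single[of i u] single[of i v] that by auto
    then show ?thesis using it[OF \<open>i < k\<close>] unfolding indep_transversal_def by simp
  qed
  ultimately show ?thesis unfolding packing_map_def by blast
qed

lemma packing_map_lift:
  assumes "packing_map k V E L {e\<in>EH. e \<subseteq> W} s" "\<forall>v\<in>V. L v \<subseteq> W"
  shows "packing_map k V E L EH s"
proof -
  have "s v i \<in> W" if "v \<in> V" "i < k" for v i
    using packing_map_mem[OF assms(1) that] assms(2) that by blast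
  then show ?thesis using assms(1) unfolding packing_map_def by simp
qed

lemma packing_map_singleton:
  assumes "corr_cover V E L VH EH" "bij_betw \<sigma> {..<k} (L v)"
  shows "packing_map k {v} E' L EH (\<lambda>_. \<sigma>)"
  unfolding packing_map_def using assms graph_no_loop[OF corr_cover_graph[OF assms(1)]] by simp

lemma packing_map_union:
  assumes s1: "packing_map k V1 E L EH s1" and s2: "packing_map k V2 E L EH s2"
    and cross: "\<forall>u\<in>V1. \<forall>v\<in>V2. {u, v} \<in> E \<longrightarrow> (\<forall>i<k. {s1 u i, s2 v i} \<notin> EH)"
  shows "packing_map k (V1 \<union> V2) E L EH (\<lambda>v. if v \<in> V1 then s1 v else s2 v)"
  using assms unfolding packing_map_def by (auto simp: insert_commute)

lemma packing_map_three:
  assumes cover: "corr_cover V E L VH EH" and "a \<noteq> b" "b \<noteq> c" "a \<noteq> c"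
    and \<sigma>: "bij_betw \<sigma>a {..<k} (L a)" "bij_betw \<sigma>b {..<k} (L b)" "bij_betw \<sigma>c {..<k} (L c)"
    and ab: "{a, b} \<in> E \<Longrightarrow> \<forall>i<k. {\<sigma>a i, \<sigma>b i} \<notin> EH"
    and bc: "{b, c} \<in> E \<Longrightarrow> \<forall>i<k. {\<sigma>b i, \<sigma>c i} \<notin> EH"
    and ac: "{a, c} \<in> E \<Longrightarrow> \<forall>i<k. {\<sigma>a i, \<sigma>c i} \<notin> EH"
  shows "packing_map k {a, b, c} E L EH (\<lambda>v. if v = a then \<sigma>a else if v = b then \<sigma>b else \<sigma>c)"
  unfolding packing_map_def
proof (intro conjI ballI impI allI)
  fix v assume "v \<in> {a, b, c}"
  then show "bij_betw (if v = a then \<sigma>a else if v = b then \<sigma>b else \<sigma>c) {..<k} (L v)"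
    using \<sigma> by auto
next
  have no_loop: "{x, x} \<notin> EH" for x using graph_no_loop[OF corr_cover_graph[OF cover]] .
  fix u v i assume "u \<in> {a, b, c}" "v \<in> {a, b, c}" "{u, v} \<in> E" "i < k"
  then show "{(if u = a then \<sigma>a else if u = b then \<sigma>b else \<sigma>c) i,
      (if v = a then \<sigma>a else if v = b then \<sigma>b else \<sigma>c) i} \<notin> EH"
    using assms(2-4) ab bc ac no_loop by (auto simp: insert_commute)
qed

definition packable :: "nat \<Rightarrow> 'a set \<Rightarrow> 'a set set \<Rightarrow> bool" where
  "packable k V E \<longleftrightarrow>
     (\<forall>(L :: 'a \<Rightarrow> nat set) VH EH. kfold_cover k V E L VH EH \<longrightarrow> has_packing k V L VH EH)"

lemma chi_c_star_eq_Least: "chi_c_star V E = (LEAST k. 1 \<le> k \<and> packable k V E)"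
  unfolding chi_c_star_def packable_def by simp

lemma packing_map_of_restriction:
  fixes L' :: "'a \<Rightarrow> nat set"
  assumes "packable k V' E'" and cover: "corr_cover V E L VH EH" and "V' \<subseteq> V"
    and L': "\<forall>v\<in>V'. L' v \<subseteq> L v \<and> card (L' v) = k"
    and E': "\<And>u v. u \<in> V' \<Longrightarrow> v \<in> V' \<Longrightarrow> {u, v} \<in> E' \<longleftrightarrow> {u, v} \<in> E"
  shows "\<exists>s. packing_map k V' E L' EH s"
proof -
  let ?W = "\<Union>v\<in>V'. L' v"
  have "kfold_cover k V' E' L' ?W {e\<in>EH. e \<subseteq> ?W}"
    using corr_cover_restrict[OF cover \<open>V' \<subseteq> V\<close>] L' E' unfolding kfold_cover_def by simp
  then obtain s where "packing_map k V' E' L' {e\<in>EH. e \<subseteq> ?W} s"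
    using assms(1) packing_map_if_has_packing unfolding packable_def by blast
  then have "packing_map k V' E' L' EH s" by (rule packing_map_lift) blast
  then have "packing_map k V' E L' EH s" using E' unfolding packing_map_def by simp
  then show ?thesis by blast
qed

lemma packable_Suc:
  assumes packable: "packable k V E" and "1 \<le> k"
  shows "packable (Suc k) V E"
  unfolding packable_def
proof (intro allI impI)
  fix L :: "'a \<Rightarrow> nat set" and VH EH
  assume "kfold_cover (Suc k) V E L VH EH"
  then have cc: "corr_cover V E L VH EH" and card: "\<forall>v\<in>V. card (L v) = Suc k"
    unfolding kfold_cover_def by simp_all
  have remove: "\<exists>s. packing_map k V E (\<lambda>v. L v - {t v}) EH s" if "\<forall>v\<in>V. t v \<in> L v" for t
    by (intro packing_map_of_restriction[OF packable cc subset_refl]) (use that card in auto)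
  have "\<forall>v\<in>V. \<exists>x. x \<in> L v"
    using card by (metis card.empty ex_in_conv nat.distinct(1))
  then obtain r where "\<forall>v\<in>V. r v \<in> L v" by metis
  then obtain s1 where s1: "packing_map k V E (\<lambda>v. L v - {r v}) EH s1"
    using remove by blast
  (* The first transversal of a packing of the shortened lists is a transversal of the full cover;
     removing it leaves a k-fold cover again. *)
  define t where "t v = s1 v 0" for v
  have t: "\<forall>v\<in>V. t v \<in> L v"
    using packing_map_mem[OF s1] \<open>1 \<le> k\<close> unfolding t_def by auto
  have t_indep: "{t u, t v} \<notin> EH" if "u \<in> V" "v \<in> V" "{u, v} \<in> E" for u v
    using s1 that \<open>1 \<le> k\<close> unfolding packing_map_def t_def by simp
  obtain s2 where s2: "packing_map k V E (\<lambda>v. L v - {t v}) EH s2"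
    using remove[OF t] by blast
  define s where "s v = (s2 v)(k := t v)" for v
  have "bij_betw (s v) {..<Suc k} (L v)" if v: "v \<in> V" for v
  proof -
    have "bij_betw (s v) {..<k} (L v - {t v})"
      using s2 v unfolding packing_map_def s_def by (auto intro: bij_betw_cong[THEN iffD1])
    moreover have "bij_betw (s v) {k} {t v}" unfolding s_def by simp
    ultimately have "bij_betw (s v) ({..<k} \<union> {k}) ((L v - {t v}) \<union> {t v})"
      by (rule bij_betw_combine) simp
    moreover have "(L v - {t v}) \<union> {t v} = L v" using t v by auto
    ultimately show ?thesis by (simp add: lessThan_Suc)
  qed
  moreover have "{s u i, s v i} \<notin> EH" if "u \<in> V" "v \<in> V" "{u, v} \<in> E" "i < Suc k" for u v i
    using s2 t_indep that unfolding packing_map_def s_def by (cases "i = k") auto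
  ultimately have "packing_map (Suc k) V E L EH s"
    unfolding packing_map_def by blast
  then show "has_packing (Suc k) V L VH EH"
    by (rule has_packing_if_packing_map[OF cc])
qed

lemma packable_mono:
  assumes "packable k V E" "1 \<le> k" "k \<le> m"
  shows "packable m V E"
  using assms(3,1)
proof (induction rule: dec_induct)
  case (step n)
  then show ?case using packable_Suc[of n V E] \<open>1 \<le> k\<close> by simp
qed

(* Greedy colouring: with 2|V| + 1 colours the conflicts of a new vertex have degree at most |V|. *)
lemma packable_large:
  assumes graph: "graph V E"
  shows "packable (2 * card V + 1) V E"
  unfolding packable_def
proof (intro allI impI)
  fix L :: "'a \<Rightarrow> nat set" and VH EH
  define k where "k = 2 * card V + 1"
  assume "kfold_cover (2 * card V + 1) V E L VH EH"
  then have cc: "corr_cover V E L VH EH" and card: "\<forall>v\<in>V. card (L v) = k"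
    unfolding kfold_cover_def k_def by simp_all
  have "\<exists>s. packing_map k V E L EH s"
    using graph_finite[OF graph] subset_refl
  proof (induction rule: finite_subset_induct')
    case empty
    show ?case unfolding packing_map_def by simp
  next
    case (insert a W)
    then obtain s where s: "packing_map k W E L EH s" by blast
    define N where "N = {w\<in>W. {w, a} \<in> E}"
    have N: "N \<subseteq> V" "finite N" "card N \<le> card V" "\<forall>w\<in>N. {w, a} \<in> E"
      using insert graph_finite[OF graph] unfolding N_def by (auto intro: finite_subset card_mono)
    have "\<forall>w\<in>N. inj_on (s w) {..<k} \<and> s w ` {..<k} \<subseteq> L w"
      using s unfolding N_def packing_map_def bij_betw_def by auto
    then have conflicts: "degree_bounded (card V) {..<k} (L a) (\<lambda>i y. \<exists>w\<in>N. {s w i, y} \<in> EH)"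
      by (intro conflict_degree_bounded[OF cc \<open>a \<in> V\<close> N]) simp_all
    obtain \<sigma> where \<sigma>: "bij_betw \<sigma> {..<k} (L a)"
      and free: "\<forall>i<k. \<not> (\<exists>w\<in>N. {s w i, \<sigma> i} \<in> EH)"
      using ex_bij_avoiding[OF _ corr_cover_finite[OF cc \<open>a \<in> V\<close>] _ conflicts] card \<open>a \<in> V\<close>
      unfolding k_def by auto
    have "packing_map k (W \<union> {a}) E L EH (\<lambda>v. if v \<in> W then s v else \<sigma>)"
      using free unfolding N_def
      by (intro packing_map_union[OF s packing_map_singleton[OF cc \<sigma>]]) blast
    then show ?case by auto
  qed
  then show "has_packing (2 * card V + 1) V L VH EH"
    using has_packing_if_packing_map[OF cc] unfolding k_def by blast
qed

lemma chi_c_star_le_if_packable: "packable k V E \<Longrightarrow> 1 \<le> k \<Longrightarrow> chi_c_star V E \<le> k"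
  unfolding chi_c_star_eq_Least by (simp add: Least_le)

lemma packable_if_chi_c_star_le:
  assumes "graph V E" "chi_c_star V E \<le> k"
  shows "packable k V E"
proof -
  have "\<exists>k. 1 \<le> k \<and> packable k V E" using packable_large[OF assms(1)] by auto
  then have "1 \<le> chi_c_star V E \<and> packable (chi_c_star V E) V E"
    unfolding chi_c_star_eq_Least by (rule LeastI_ex)
  then show ?thesis using packable_mono assms(2) by blast
qed

definition perms4 :: "nat list list" where
  "perms4 = [[0,1,2,3], [0,1,3,2], [0,2,1,3], [0,2,3,1], [0,3,1,2], [0,3,2,1],
             [1,0,2,3], [1,0,3,2], [1,2,0,3], [1,2,3,0], [1,3,0,2], [1,3,2,0],
             [2,0,1,3], [2,0,3,1], [2,1,0,3], [2,1,3,0], [2,3,0,1], [2,3,1,0],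
             [3,0,1,2], [3,0,2,1], [3,1,0,2], [3,1,2,0], [3,2,0,1], [3,2,1,0]]"

lemma bij_betw_nth_perms4: "p \<in> set perms4 \<Longrightarrow> bij_betw ((!) p) {..<4} {..<4}"
  unfolding perms4_def by (auto intro!: bij_betw_nth simp: lessThan_nat_numeral)

lemma perms4_nth_less: "p \<in> set perms4 \<Longrightarrow> i < 4 \<Longrightarrow> p ! i < 4"
  using bij_betw_nth_perms4 unfolding bij_betw_def by blast

lemma bij_betw_comp_perms4:
  "p \<in> set perms4 \<Longrightarrow> bij_betw \<beta> {..<4} L \<Longrightarrow> bij_betw (\<lambda>i. \<beta> (p ! i)) {..<4} L"
  using bij_betw_trans[OF bij_betw_nth_perms4] by (simp add: comp_def)

lemma all_less_4: "(\<forall>i<(4::nat). P i) \<longleftrightarrow> P 0 \<and> P 1 \<and> P 2 \<and> P 3"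
  by (auto simp: less_Suc_eq numeral_eq_Suc)

lemma degree_bounded_1_on_4:
  assumes "degree_bounded 1 {..<4::nat} {..<4::nat} R"
  shows "\<forall>i<4. \<forall>j1<4. \<forall>j2<4. j1 < j2 \<longrightarrow> \<not> (R i j1 \<and> R i j2) \<and> \<not> (R j1 i \<and> R j2 i)"
proof (intro allI impI conjI notI)
  fix i j1 j2 :: nat assume "i < 4" "j1 < 4" "j2 < 4" "j1 < j2"
  then have S: "card {j1, j2} = 2" "{j1, j2} \<subseteq> {..<4}" "i \<in> {..<4}" by auto
  then show False if "R i j1 \<and> R i j2"
    using that degree_bounded_row_card_le[OF assms _ S(3), of "{j1, j2}"] by simp
  show False if "R j1 i \<and> R j2 i"
    using that S degree_bounded_col_card_le[OF assms _ S(3), of "{j1, j2}"] by simp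
qed

lemma degree_bounded_2_on_4:
  assumes "degree_bounded 2 {..<4::nat} {..<4::nat} R"
  shows "\<forall>i<4. \<forall>j1<4. \<forall>j2<4. \<forall>j3<4. j1 < j2 \<longrightarrow> j2 < j3 \<longrightarrow>
    \<not> (R i j1 \<and> R i j2 \<and> R i j3) \<and> \<not> (R j1 i \<and> R j2 i \<and> R j3 i)"
proof (intro allI impI conjI notI)
  fix i j1 j2 j3 :: nat assume "i < 4" "j1 < 4" "j2 < 4" "j3 < 4" "j1 < j2" "j2 < j3"
  then have S: "card {j1, j2, j3} = 3" "{j1, j2, j3} \<subseteq> {..<4}" "i \<in> {..<4}" by auto
  then show False if "R i j1 \<and> R i j2 \<and> R i j3"
    using that degree_bounded_row_card_le[OF assms _ S(3), of "{j1, j2, j3}"] by simp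
  show False if "R j1 i \<and> R j2 i \<and> R j3 i"
    using that S degree_bounded_col_card_le[OF assms _ S(3), of "{j1, j2, j3}"] by simp
qed

(* Both solutions are found by exhaustive propositional search over the 24 permutations. *)
lemma perms4_path_solution:
  assumes "degree_bounded 2 {..<4} {..<4} A" "degree_bounded 2 {..<4} {..<4} C"
  shows "\<exists>pb\<in>set perms4. (\<forall>i<4. pb ! i \<noteq> i) \<and>
    (\<exists>pa\<in>set perms4. \<forall>i<4. pa ! i \<noteq> pb ! i \<and> \<not> A i (pa ! i)) \<and>
    (\<exists>pc\<in>set perms4. \<forall>i<4. pc ! i \<noteq> pb ! i \<and> \<not> C i (pc ! i))"
proof -
  note A = degree_bounded_2_on_4[OF assms(1), unfolded all_less_4, simplified]
    and C = degree_bounded_2_on_4[OF assms(2), unfolded all_less_4, simplified]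
  show ?thesis
    unfolding perms4_def all_less_4 apply simp
    using A C unfolding One_nat_def by satx
qed

lemma perms4_triangle_solution:
  assumes "degree_bounded 1 {..<4} {..<4} A" "degree_bounded 1 {..<4} {..<4} C"
    "degree_bounded 1 {..<4} {..<4} M"
  shows "\<exists>pb\<in>set perms4. (\<forall>i<4. pb ! i \<noteq> i) \<and>
    (\<exists>pa\<in>set perms4. (\<forall>i<4. pa ! i \<noteq> pb ! i \<and> \<not> A i (pa ! i)) \<and>
      (\<exists>pc\<in>set perms4. \<forall>i<4. pc ! i \<noteq> pb ! i \<and> \<not> C i (pc ! i) \<and> \<not> M (pa ! i) (pc ! i)))"
proof -
  note A = degree_bounded_1_on_4[OF assms(1), unfolded all_less_4, simplified]
    and C = degree_bounded_1_on_4[OF assms(2), unfolded all_less_4, simplified]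
    and M = degree_bounded_1_on_4[OF assms(3), unfolded all_less_4, simplified]
  show ?thesis
    unfolding perms4_def all_less_4 apply simp
    using A C M unfolding One_nat_def by satx
qed

lemma finite_if_card_eq_4: "card A = 4 \<Longrightarrow> finite A"
  by (rule card_ge_0_finite) simp

lemma ex_diagonalising_bijections:
  fixes Fb :: "nat \<Rightarrow> 'b \<Rightarrow> bool" and Mab Mbc :: "'b \<Rightarrow> 'b \<Rightarrow> bool"
  assumes card: "card La = 4" "card Lb = 4" "card Lc = 4"
    and Fb: "degree_bounded 1 {..<4} Lb Fb"
    and Mab: "degree_bounded 1 La Lb Mab" and Mbc: "degree_bounded 1 Lb Lc Mbc"
  obtains \<beta>a \<beta>b \<beta>c where "bij_betw \<beta>a {..<4} La" "bij_betw \<beta>b {..<4} Lb" "bij_betw \<beta>c {..<4} Lc"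
    and "\<And>i j. i < 4 \<Longrightarrow> j < 4 \<Longrightarrow> Fb i (\<beta>b j) \<Longrightarrow> i = j"
    and "\<And>i j. i < 4 \<Longrightarrow> j < 4 \<Longrightarrow> Mab (\<beta>a i) (\<beta>b j) \<Longrightarrow> i = j"
    and "\<And>i j. i < 4 \<Longrightarrow> j < 4 \<Longrightarrow> Mbc (\<beta>b j) (\<beta>c i) \<Longrightarrow> i = j"
proof -
  have fin: "finite La" "finite Lb" "finite Lc" using card by (simp_all add: finite_if_card_eq_4)
  obtain \<beta>b where \<beta>b: "bij_betw \<beta>b {..<4} Lb" and diag_b: "\<forall>i<4. \<forall>y\<in>Lb. Fb i y \<longrightarrow> y = \<beta>b i"
    using ex_bij_extending_matching[OF _ fin(2) _ Fb] card by auto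
  have Mab': "degree_bounded 1 {..<4} La (\<lambda>j y. Mab y (\<beta>b j))"
    using degree_bounded_comp_bij[OF degree_bounded_converse[OF Mab] \<beta>b bij_betw_id] by simp
  obtain \<beta>a where \<beta>a: "bij_betw \<beta>a {..<4} La" and diag_a: "\<forall>j<4. \<forall>y\<in>La. Mab y (\<beta>b j) \<longrightarrow> y = \<beta>a j"
    using ex_bij_extending_matching[OF _ fin(1) _ Mab'] card by auto
  have Mbc': "degree_bounded 1 {..<4} Lc (\<lambda>j y. Mbc (\<beta>b j) y)"
    using degree_bounded_comp_bij[OF Mbc \<beta>b bij_betw_id] by simp
  obtain \<beta>c where \<beta>c: "bij_betw \<beta>c {..<4} Lc" and diag_c: "\<forall>j<4. \<forall>y\<in>Lc. Mbc (\<beta>b j) y \<longrightarrow> y = \<beta>c j"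
    using ex_bij_extending_matching[OF _ fin(3) _ Mbc'] card by auto
  have inj: "\<And>\<beta> L i j. bij_betw \<beta> {..<4::nat} L \<Longrightarrow> i < 4 \<Longrightarrow> j < 4 \<Longrightarrow> \<beta> i = \<beta> j \<Longrightarrow> i = j"
    unfolding bij_betw_def by (auto dest: inj_onD)
  have mem: "\<And>\<beta> L i. bij_betw \<beta> {..<4::nat} L \<Longrightarrow> i < 4 \<Longrightarrow> \<beta> i \<in> L"
    unfolding bij_betw_def by auto
  show ?thesis
  proof (rule that[OF \<beta>a \<beta>b \<beta>c])
    show "i = j" if "i < 4" "j < 4" "Fb i (\<beta>b j)" for i j
      using diag_b mem[OF \<beta>b] inj[OF \<beta>b] that by metis
    show "i = j" if "i < 4" "j < 4" "Mab (\<beta>a i) (\<beta>b j)" for i j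
      using diag_a mem[OF \<beta>a] inj[OF \<beta>a] that by metis
    show "i = j" if "i < 4" "j < 4" "Mbc (\<beta>b j) (\<beta>c i)" for i j
      using diag_c mem[OF \<beta>c] inj[OF \<beta>c] that by metis
  qed
qed

(* Fx i y: y may not get colour i because of a neighbour of x outside the path a - b - c;
   Mxy: adjacency in the cover between the lists of x and y. Mac is empty unless a b c is a
   triangle, and then the conflicts at a and c have degree at most 1. *)
lemma ex_compatible_bijections:
  fixes Fa Fb Fc :: "nat \<Rightarrow> 'b \<Rightarrow> bool" and Mab Mbc Mac :: "'b \<Rightarrow> 'b \<Rightarrow> bool"
  assumes card: "card La = 4" "card Lb = 4" "card Lc = 4"
    and Fa: "degree_bounded 2 {..<4} La Fa" and Fb: "degree_bounded 1 {..<4} Lb Fb"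
    and Fc: "degree_bounded 2 {..<4} Lc Fc"
    and Mab: "degree_bounded 1 La Lb Mab" and Mbc: "degree_bounded 1 Lb Lc Mbc"
    and Mac: "degree_bounded 1 La Lc Mac"
    and triangle: "\<not> (\<forall>p\<in>La. \<forall>q\<in>Lc. \<not> Mac p q) \<Longrightarrow>
      degree_bounded 1 {..<4} La Fa \<and> degree_bounded 1 {..<4} Lc Fc"
  obtains \<sigma>a \<sigma>b \<sigma>c where "bij_betw \<sigma>a {..<4} La" "bij_betw \<sigma>b {..<4} Lb" "bij_betw \<sigma>c {..<4} Lc"
    and "\<And>i. i < 4 \<Longrightarrow> \<not> Fa i (\<sigma>a i) \<and> \<not> Fb i (\<sigma>b i) \<and> \<not> Fc i (\<sigma>c i) \<and>
      \<not> Mab (\<sigma>a i) (\<sigma>b i) \<and> \<not> Mbc (\<sigma>b i) (\<sigma>c i) \<and> \<not> Mac (\<sigma>a i) (\<sigma>c i)"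
proof -
  obtain \<beta>a \<beta>b \<beta>c where \<beta>: "bij_betw \<beta>a {..<4} La" "bij_betw \<beta>b {..<4} Lb" "bij_betw \<beta>c {..<4} Lc"
    and diag_b: "\<And>i j. i < 4 \<Longrightarrow> j < 4 \<Longrightarrow> Fb i (\<beta>b j) \<Longrightarrow> i = j"
    and diag_ab: "\<And>i j. i < 4 \<Longrightarrow> j < 4 \<Longrightarrow> Mab (\<beta>a i) (\<beta>b j) \<Longrightarrow> i = j"
    and diag_bc: "\<And>i j. i < 4 \<Longrightarrow> j < 4 \<Longrightarrow> Mbc (\<beta>b j) (\<beta>c i) \<Longrightarrow> i = j"
    using ex_diagonalising_bijections[OF card Fb Mab Mbc] by blast
  define A where "A i j = Fa i (\<beta>a j)" for i j
  define C where "C i j = Fc i (\<beta>c j)" for i j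
  define M where "M i j = Mac (\<beta>a i) (\<beta>c j)" for i j
  have degree_bounded_renumbered: "degree_bounded d {..<4} {..<4} (\<lambda>i j. F i (\<beta> j))"
    if "degree_bounded d {..<4} L F" "bij_betw \<beta> {..<4} L" for d L and F :: "nat \<Rightarrow> 'b \<Rightarrow> bool" and \<beta>
    using degree_bounded_comp_bij[OF that(1) bij_betw_id that(2)] by simp
  obtain pa pb pc where p: "pa \<in> set perms4" "pb \<in> set perms4" "pc \<in> set perms4"
    and pi: "\<And>i. i < 4 \<Longrightarrow> pb ! i \<noteq> i \<and> pa ! i \<noteq> pb ! i \<and> pc ! i \<noteq> pb ! i \<and>
      \<not> A i (pa ! i) \<and> \<not> C i (pc ! i) \<and> \<not> M (pa ! i) (pc ! i)"
  proof (cases "\<forall>p\<in>La. \<forall>q\<in>Lc. \<not> Mac p q")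
    case True
    then have no_M: "\<not> M i j" if "i < 4" "j < 4" for i j
      using \<beta> that unfolding M_def bij_betw_def by auto
    obtain pa pb pc where p: "pa \<in> set perms4" "pb \<in> set perms4" "pc \<in> set perms4"
      and pi: "\<forall>i<4. pb ! i \<noteq> i \<and> pa ! i \<noteq> pb ! i \<and> pc ! i \<noteq> pb ! i \<and>
        \<not> A i (pa ! i) \<and> \<not> C i (pc ! i)"
      using perms4_path_solution[of A C] degree_bounded_renumbered[OF Fa \<beta>(1)]
        degree_bounded_renumbered[OF Fc \<beta>(3)] unfolding A_def C_def by metis
    show ?thesis
    proof (rule that[OF p])
      fix i :: nat assume "i < 4"
      then show "pb ! i \<noteq> i \<and> pa ! i \<noteq> pb ! i \<and> pc ! i \<noteq> pb ! i \<and>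
        \<not> A i (pa ! i) \<and> \<not> C i (pc ! i) \<and> \<not> M (pa ! i) (pc ! i)"
        using pi no_M perms4_nth_less p by simp
    qed
  next
    case False
    then have "degree_bounded 1 {..<4} {..<4} A" "degree_bounded 1 {..<4} {..<4} C"
      using triangle degree_bounded_renumbered \<beta> unfolding A_def C_def by auto
    moreover have "degree_bounded 1 {..<4} {..<4} M"
      using degree_bounded_comp_bij[OF Mac \<beta>(1) \<beta>(3)] unfolding M_def .
    ultimately show ?thesis using perms4_triangle_solution[of A C M] that by metis
  qed
  show ?thesis
  proof (rule that[OF bij_betw_comp_perms4[OF p(1) \<beta>(1)] bij_betw_comp_perms4[OF p(2) \<beta>(2)]
        bij_betw_comp_perms4[OF p(3) \<beta>(3)]])
    fix i :: nat assume "i < 4"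
    then have "pa ! i < 4" "pb ! i < 4" "pc ! i < 4" using p perms4_nth_less by auto
    then show "\<not> Fa i (\<beta>a (pa ! i)) \<and> \<not> Fb i (\<beta>b (pb ! i)) \<and> \<not> Fc i (\<beta>c (pc ! i)) \<and>
      \<not> Mab (\<beta>a (pa ! i)) (\<beta>b (pb ! i)) \<and> \<not> Mbc (\<beta>b (pb ! i)) (\<beta>c (pc ! i)) \<and>
      \<not> Mac (\<beta>a (pa ! i)) (\<beta>c (pc ! i))"
      using pi[OF \<open>i < 4\<close>] diag_b[OF \<open>i < 4\<close>] diag_ab[of "pa ! i" "pb ! i"]
        diag_bc[of "pc ! i" "pb ! i"]
      unfolding A_def C_def M_def by metis
  qed
qed

lemma packing_map_extend_three:
  assumes cover: "corr_cover V E L VH EH" and T: "a \<in> V" "b \<in> V" "c \<in> V" "a \<noteq> b" "b \<noteq> c" "a \<noteq> c"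
    and s0: "packing_map k (V - {a, b, c}) E L EH s0"
    and \<sigma>: "bij_betw \<sigma>a {..<k} (L a)" "bij_betw \<sigma>b {..<k} (L b)" "bij_betw \<sigma>c {..<k} (L c)"
    and outside: "\<forall>w\<in>V - {a, b, c}. \<forall>i<k. ({w, a} \<in> E \<longrightarrow> {s0 w i, \<sigma>a i} \<notin> EH) \<and>
      ({w, b} \<in> E \<longrightarrow> {s0 w i, \<sigma>b i} \<notin> EH) \<and> ({w, c} \<in> E \<longrightarrow> {s0 w i, \<sigma>c i} \<notin> EH)"
    and ab: "{a, b} \<in> E \<Longrightarrow> \<forall>i<k. {\<sigma>a i, \<sigma>b i} \<notin> EH"
    and bc: "{b, c} \<in> E \<Longrightarrow> \<forall>i<k. {\<sigma>b i, \<sigma>c i} \<notin> EH"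
    and ac: "{a, c} \<in> E \<Longrightarrow> \<forall>i<k. {\<sigma>a i, \<sigma>c i} \<notin> EH"
  shows "\<exists>s. packing_map k V E L EH s"
proof -
  let ?sT = "\<lambda>v. if v = a then \<sigma>a else if v = b then \<sigma>b else \<sigma>c"
  have "packing_map k {a, b, c} E L EH ?sT"
    by (rule packing_map_three[OF cover T(4-6) \<sigma> ab bc ac])
  moreover have "\<forall>w\<in>V - {a, b, c}. \<forall>v\<in>{a, b, c}. {w, v} \<in> E \<longrightarrow> (\<forall>i<k. {s0 w i, ?sT v i} \<notin> EH)"
    using outside by auto
  ultimately have "packing_map k ((V - {a, b, c}) \<union> {a, b, c}) E L EH
      (\<lambda>v. if v \<in> V - {a, b, c} then s0 v else ?sT v)"
    by (rule packing_map_union[OF s0])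
  moreover have "(V - {a, b, c}) \<union> {a, b, c} = V" using T by auto
  ultimately show ?thesis by auto
qed

lemma packing_map_extend_cubic_path:
  assumes graph: "graph V E" and cc: "corr_cover V E L VH EH" and card: "\<forall>v\<in>V. card (L v) = 4"
    and T: "a \<in> V" "b \<in> V" "c \<in> V" "a \<noteq> b" "b \<noteq> c" "a \<noteq> c"
    and edges: "{a, b} \<in> E" "{b, c} \<in> E"
    and degree: "degree V E a = 3" "degree V E b = 3" "degree V E c = 3"
    and s0: "packing_map 4 (V - {a, b, c}) E L EH s0"
  shows "\<exists>s. packing_map 4 V E L EH s"
proof -
  define N where "N x = {w\<in>V - {a, b, c}. {w, x} \<in> E}" for x
  define F where "F x i y = (\<exists>w\<in>N x. {s0 w i, y} \<in> EH)" for x i y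
  have conflicts: "degree_bounded d {..<4} (L x) (F x)" if "x \<in> V" "card (N x) \<le> d" for x d
    unfolding F_def
  proof (rule conflict_degree_bounded[OF cc \<open>x \<in> V\<close>])
    show "finite (N x)" using graph_finite[OF graph] unfolding N_def by simp
    show "\<forall>w\<in>N x. inj_on (s0 w) {..<4} \<and> s0 w ` {..<4} \<subseteq> L w"
      using s0 unfolding N_def packing_map_def bij_betw_def by simp
  qed (use that in \<open>auto simp: N_def\<close>)
  have N_card: "card (N x) + card S \<le> 3"
    if "x \<in> {a, b, c}" "S \<subseteq> {a, b, c}" "\<forall>u\<in>S. {u, x} \<in> E" for x S
    using degree_split[OF graph that(2) _ that(3)] degree T that(1) unfolding N_def by auto
  have edges': "{b, a} \<in> E" "{c, b} \<in> E" using edges by (simp_all add: insert_commute)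
  have Na: "card (N a) \<le> 2" and Nb: "card (N b) \<le> 1" and Nc: "card (N c) \<le> 2"
    using N_card[of a "{b}"] N_card[of b "{a, c}"] N_card[of c "{b}"] edges edges' T by auto
  have Nac: "card (N a) \<le> 1 \<and> card (N c) \<le> 1" if "{a, c} \<in> E"
    using that N_card[of a "{b, c}"] N_card[of c "{a, b}"] edges edges' T
    by (auto simp: insert_commute)
  define Mac where "Mac p q = ({a, c} \<in> E \<and> {p, q} \<in> EH)" for p q
  have "degree_bounded 1 (L a) (L c) Mac"
    using matching_degree_bounded[OF cc T(1,3)] unfolding Mac_def degree_bounded_def
    by (cases "{a, c} \<in> E") auto
  then obtain \<sigma>a \<sigma>b \<sigma>c
    where \<sigma>: "bij_betw \<sigma>a {..<4} (L a)" "bij_betw \<sigma>b {..<4} (L b)" "bij_betw \<sigma>c {..<4} (L c)"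
      and free: "\<And>i. i < 4 \<Longrightarrow> \<not> F a i (\<sigma>a i) \<and> \<not> F b i (\<sigma>b i) \<and> \<not> F c i (\<sigma>c i) \<and>
        {\<sigma>a i, \<sigma>b i} \<notin> EH \<and> {\<sigma>b i, \<sigma>c i} \<notin> EH \<and> \<not> Mac (\<sigma>a i) (\<sigma>c i)"
    using ex_compatible_bijections[of "L a" "L b" "L c" "F a" "F b" "F c"]
      card T conflicts Na Nb Nc Nac matching_degree_bounded[OF cc T(1,2) edges(1)]
      matching_degree_bounded[OF cc T(2,3) edges(2)] unfolding Mac_def by blast
  show ?thesis
    by (rule packing_map_extend_three[OF cc T s0 \<sigma>])
      (use free in \<open>auto simp: F_def N_def Mac_def\<close>)
qed

lemma packable_4_extend:
  assumes graph: "graph V E" and T: "a \<in> V" "b \<in> V" "c \<in> V" "a \<noteq> b" "b \<noteq> c" "a \<noteq> c"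
    and edges: "{a, b} \<in> E" "{b, c} \<in> E"
    and degree: "degree V E a = 3" "degree V E b = 3" "degree V E c = 3"
    and packable: "packable 4 (V - {a, b, c}) (induced_edges E (V - {a, b, c}))"
  shows "packable 4 V E"
  unfolding packable_def
proof (intro allI impI)
  fix L :: "'a \<Rightarrow> nat set" and VH EH
  assume "kfold_cover 4 V E L VH EH"
  then have cc: "corr_cover V E L VH EH" and card: "\<forall>v\<in>V. card (L v) = 4"
    unfolding kfold_cover_def by simp_all
  obtain s0 where "packing_map 4 (V - {a, b, c}) E L EH s0"
    using packing_map_of_restriction[OF packable cc] card by (auto simp: induced_edges_def)
  then obtain s where "packing_map 4 V E L EH s"
    using packing_map_extend_cubic_path[OF graph cc card T edges degree] by blast
  then show "has_packing 4 V L VH EH" by (rule has_packing_if_packing_map[OF cc])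
qed

theorem mainTheorem6:
  fixes V :: "'a set" and E :: "'a set set" and a b c :: 'a
  assumes "graph V E"
    and "a \<in> V" "b \<in> V" "c \<in> V" "a \<noteq> b" "b \<noteq> c" "a \<noteq> c"
    and "{a, b} \<in> E" "{b, c} \<in> E"
    and "degree V E a = 3" "degree V E b = 3" "degree V E c = 3"
    and "chi_c_star (V - {a, b, c}) (induced_edges E (V - {a, b, c})) \<le> 4"
  shows "chi_c_star V E \<le> 4"
proof -
  have "graph (V - {a, b, c}) (induced_edges E (V - {a, b, c}))"
    using assms(1) by (rule graph_induced) blast
  then have "packable 4 (V - {a, b, c}) (induced_edges E (V - {a, b, c}))"
    using assms(13) by (rule packable_if_chi_c_star_le)
  then have "packable 4 V E"
    by (rule packable_4_extend[OF assms(1-12)])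
  then show ?thesis by (rule chi_c_star_le_if_packable) simp
qed

end
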